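(* Let $a_1,a_2\in\mathbb{R}$ with $a_1^2+4a_2>0$, and assume either $a_1<0$ and $a_2<0$, or $a_2>0$ and $a_1+a_2<1$. Let $X$ be the AR(2)-process with these coefficients and $s_2:=(a_1-\sqrt{a_1^2+4a_2})/2$. Then $s_2<0$, $-a_2/s_2<1$, and $Z_n:=X_n-s_2X_{n-1}$ satisfies $Z_n=(-a_2/s_2)Z_{n-1}+Y_n$ for $n\ge1$. In particular, for all $x\ge0$ and $N\ge1$, $$\mathbb{P}\Big(\sup_{n=1,\dots,N}X_n\le x\Big)\le\mathbb{P}\Big(\sup_{n=1,\dots,N}Z_n\le(1-s_2)x\Big).$$
   Context: Let $(Y_n)_{n\ge1}$ be i.i.d. nondegenerate real random variables. The AR(2)-process is $X_n=a_1X_{n-1}+a_2X_{n-2}+Y_n$ for $n\ge1$ with $X_n=0$ for $n\le0$. *)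

theory Defs
  imports "HOL-Probability.Probability"
begin

text \<open>AR(2) process: X 0 = 0 (and X at negative times = 0),
  X n = a1 * X (n-1) + a2 * X (n-2) + Y n for n >= 1.
  Innovations are indexed by n >= 1; Y 0 is unused.\<close>
fun ar2 :: "real \<Rightarrow> real \<Rightarrow> (nat \<Rightarrow> 'a \<Rightarrow> real) \<Rightarrow> nat \<Rightarrow> 'a \<Rightarrow> real" where
  "ar2 a1 a2 Y 0 \<omega> = 0"
| "ar2 a1 a2 Y (Suc 0) \<omega> = Y 1 \<omega>"
| "ar2 a1 a2 Y (Suc (Suc n)) \<omega> =
     a1 * ar2 a1 a2 Y (Suc n) \<omega> + a2 * ar2 a1 a2 Y n \<omega> + Y (Suc (Suc n)) \<omega>"

end

theory Submission
  imports Defs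
begin

text \<open>
  Write the characteristic polynomial of the recursion
  X_n = a1 X_(n-1) + a2 X_(n-2) + Y_n as t^2 - a1 t - a2 = (t - s1)(t - s2) with
  s1 = (a1 + sqrt D)/2 and s2 = (a1 - sqrt D)/2, D = a1^2 + 4 a2 > 0.
  Vieta gives s1 + s2 = a1 and s1 s2 = -a2, so -a2/s2 = s1 once s2 \<noteq> 0.

  Next, a purely pathwise lemma
  shows that for ANY factorisation a1 = s1 + s2, a2 = -s1 s2 the process
  Z_n = X_n - s2 X_(n-1) obeys the AR(1) recursion Z_n = s1 Z_(n-1) + Y_n.
  A second pathwise lemma shows that if X_0, ..., X_N are all bounded by
  x \<ge> 0 and s \<le> 0, then X_n - s X_(n-1) \<le> (1 - s) x for 1 \<le> n \<le> N.
  The probability bound then follows from monotonicity of the measure, since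
  the event {max X \<le> x} is contained in the measurable event {max Z \<le> (1 - s2) x}.
\<close>

lemma ar2_roots_vieta:
  fixes a1 a2 :: real
  assumes "a1\<^sup>2 + 4 * a2 \<ge> 0"
  defines "s1 \<equiv> (a1 + sqrt (a1\<^sup>2 + 4 * a2)) / 2"
    and "s2 \<equiv> (a1 - sqrt (a1\<^sup>2 + 4 * a2)) / 2"
  shows "s1 + s2 = a1" and "s1 * s2 = - a2"
proof -
  have "sqrt (a1\<^sup>2 + 4 * a2) ^ 2 = a1\<^sup>2 + 4 * a2"
    using assms(1) by simp
  then show "s1 * s2 = - a2"
    unfolding s1_def s2_def by (simp add: field_simps power2_eq_square)
  show "s1 + s2 = a1"
    unfolding s1_def s2_def by (simp add: field_simps)
qed

text \<open>The smaller root is negative: either a2 > 0, so sqrt D exceeds |a1|,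
  or a1 < 0, so both summands of a1 - sqrt D are negative.\<close>
lemma ar2_small_root_neg:
  fixes a1 a2 :: real
  assumes "a1\<^sup>2 + 4 * a2 > 0"
    and "(a1 < 0 \<and> a2 < 0) \<or> (a2 > 0 \<and> a1 + a2 < 1)"
  shows "(a1 - sqrt (a1\<^sup>2 + 4 * a2)) / 2 < 0"
proof (cases "a2 > 0")
  case True
  then have "\<bar>a1\<bar> < sqrt (a1\<^sup>2 + 4 * a2)"
    by (intro real_less_rsqrt) simp
  then show ?thesis
    by simp
next
  case False
  then have "a1 < 0"
    using assms(2) by auto
  moreover have "sqrt (a1\<^sup>2 + 4 * a2) > 0"
    using assms(1) by simp
  ultimately have "a1 - sqrt (a1\<^sup>2 + 4 * a2) < 0"
    by linarith
  then show ?thesis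
    by simp
qed

text \<open>The larger root is below 1: for a2 > 0 this is sqrt D < 2 - a1, which
  squares to a1 + a2 < 1; for a1, a2 < 0 we have sqrt D < |a1| = -a1.\<close>
lemma ar2_large_root_lt_1:
  fixes a1 a2 :: real
  assumes "(a1 < 0 \<and> a2 < 0) \<or> (a2 > 0 \<and> a1 + a2 < 1)"
  shows "(a1 + sqrt (a1\<^sup>2 + 4 * a2)) / 2 < 1"
proof (cases "a2 > 0")
  case True
  with assms have "a1 + a2 < 1"
    by auto
  then have "a1\<^sup>2 + 4 * a2 < (2 - a1)\<^sup>2" and "2 - a1 > 0"
    using True by (auto simp: power2_eq_square algebra_simps)
  then have "sqrt (a1\<^sup>2 + 4 * a2) < 2 - a1"
    by (metis abs_of_pos real_sqrt_abs real_sqrt_less_iff)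
  then show ?thesis
    by simp
next
  case False
  with assms have "a1 < 0" "a2 < 0"
    by auto
  then have "sqrt (a1\<^sup>2 + 4 * a2) < - a1"
    by (intro real_less_lsqrt) auto
  then show ?thesis
    by simp
qed

lemma ar2_factorised_recursion:
  fixes Y :: "nat \<Rightarrow> 'a \<Rightarrow> real" and a1 a2 s1 s2 :: real
  assumes "s1 + s2 = a1" and "s1 * s2 = - a2" and "n \<ge> 1"
  defines "Z \<equiv> \<lambda>n \<omega>. ar2 a1 a2 Y n \<omega> - s2 * (if n = 0 then 0 else ar2 a1 a2 Y (n - 1) \<omega>)"
  shows "Z n \<omega> = s1 * Z (n - 1) \<omega> + Y n \<omega>"
proof -
  obtain m where n: "n = Suc m"
    using assms(3) by (cases n) auto
  show ?thesis
  proof (cases m)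
    case 0
    then show ?thesis
      using n by (simp add: Z_def)
  next
    case (Suc k)
    let ?u = "ar2 a1 a2 Y (Suc k) \<omega>" and ?v = "ar2 a1 a2 Y k \<omega>"
    have "Z n \<omega> = a1 * ?u + a2 * ?v + Y n \<omega> - s2 * ?u"
      using n Suc by (simp add: Z_def)
    also have "\<dots> = s1 * (?u - s2 * ?v) + Y n \<omega>"
    proof -
      have "a1 * u + a2 * v - s2 * u = s1 * (u - s2 * v)" for u v :: real
      proof -
        have "s1 * (u - s2 * v) = (s1 + s2) * u - (s1 * s2) * v - s2 * u"
          by (simp add: algebra_simps)
        then show ?thesis
          using assms(1,2) by simp
      qed
      from this[of ?u ?v] show ?thesis
        by simp
    qed
    also have "\<dots> = s1 * Z (n - 1) \<omega> + Y n \<omega>"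
      using n Suc by (simp add: Z_def)
    finally show ?thesis .
  qed
qed

lemma bounded_path_shift_bound:
  fixes X :: "nat \<Rightarrow> real" and s x :: real
  assumes "X 0 \<le> x" and "\<forall>k\<in>{1..N}. X k \<le> x" and "s \<le> 0" and "n \<in> {1..N}"
  shows "X n - s * X (n - 1) \<le> (1 - s) * x"
proof -
  have "n - 1 = 0 \<or> n - 1 \<in> {1..N}"
    using assms(4) by auto
  then have "X (n - 1) \<le> x"
    using assms(1,2) by auto
  then have "- s * X (n - 1) \<le> - s * x"
    using assms(3) by (intro mult_left_mono) auto
  moreover have "X n \<le> x"
    using assms(2,4) by blast
  ultimately show ?thesis
    by (simp add: algebra_simps)
qed

lemma ar2_measurable:
  assumes "\<And>n. n \<ge> 1 \<Longrightarrow> Y n \<in> borel_measurable M"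
  shows "ar2 a1 a2 Y n \<in> borel_measurable M"
proof -
  have "ar2 a1 a2 Y n \<in> borel_measurable M \<and> ar2 a1 a2 Y (Suc n) \<in> borel_measurable M"
    by (induction n) (simp_all add: assms borel_measurable_add borel_measurable_times)
  then show ?thesis
    by blast
qed

lemma (in finite_measure) measure_Max_le_mono:
  fixes f g :: "'i \<Rightarrow> 'a \<Rightarrow> real"
  assumes "finite I" and "I \<noteq> {}"
    and "\<And>i. i \<in> I \<Longrightarrow> g i \<in> borel_measurable M"
    and "\<And>\<omega>. \<omega> \<in> space M \<Longrightarrow> \<forall>i\<in>I. f i \<omega> \<le> x \<Longrightarrow> \<forall>i\<in>I. g i \<omega> \<le> y"
  shows "measure M {\<omega> \<in> space M. (MAX i\<in>I. f i \<omega>) \<le> x}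
    \<le> measure M {\<omega> \<in> space M. (MAX i\<in>I. g i \<omega>) \<le> y}"
proof (rule finite_measure_mono)
  have "{\<omega> \<in> space M. (MAX i\<in>I. g i \<omega>) \<le> y} = (\<Inter>i\<in>I. {\<omega> \<in> space M. g i \<omega> \<le> y})"
    using assms(1,2) by (auto simp: Max_le_iff)
  also have "\<dots> \<in> sets M"
    using assms(1,2,3) by (intro sets.finite_INT) auto
  finally show "{\<omega> \<in> space M. (MAX i\<in>I. g i \<omega>) \<le> y} \<in> sets M" .
  show "{\<omega> \<in> space M. (MAX i\<in>I. f i \<omega>) \<le> x} \<subseteq> {\<omega> \<in> space M. (MAX i\<in>I. g i \<omega>) \<le> y}"
    using assms(1,2,4) by (auto simp: Max_le_iff)
qed

theorem mainTheorem11: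
  fixes M :: "'a measure" and Y :: "nat \<Rightarrow> 'a \<Rightarrow> real" and a1 a2 :: real
  assumes "prob_space M"
    and "\<And>n. n \<ge> 1 \<Longrightarrow> Y n \<in> borel_measurable M"
    and "prob_space.indep_vars M (\<lambda>_. borel) Y {1..}"
    and "\<And>n. n \<ge> 1 \<Longrightarrow> distr M borel (Y n) = distr M borel (Y 1)"
    and "\<not> (\<exists>c. AE \<omega> in M. Y 1 \<omega> = c)"
    and "a1\<^sup>2 + 4 * a2 > 0"
    and "(a1 < 0 \<and> a2 < 0) \<or> (a2 > 0 \<and> a1 + a2 < 1)"
  shows "let X = ar2 a1 a2 Y;
             s2 = (a1 - sqrt (a1\<^sup>2 + 4 * a2)) / 2;
             Z = (\<lambda>n \<omega>. X n \<omega> - s2 * (if n = 0 then 0 else X (n - 1) \<omega>))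
         in s2 < 0 \<and> - a2 / s2 < 1 \<and>
            (\<forall>n\<ge>1. \<forall>\<omega>. Z n \<omega> = (- a2 / s2) * Z (n - 1) \<omega> + Y n \<omega>) \<and>
            (\<forall>x\<ge>0. \<forall>N\<ge>1.
               measure M {\<omega> \<in> space M. (MAX n\<in>{1..N}. X n \<omega>) \<le> x}
               \<le> measure M {\<omega> \<in> space M. (MAX n\<in>{1..N}. Z n \<omega>) \<le> (1 - s2) * x})"
proof -
  interpret prob_space M by (rule assms(1))
  define X where "X = ar2 a1 a2 Y"
  define s1 where "s1 = (a1 + sqrt (a1\<^sup>2 + 4 * a2)) / 2"
  define s2 where "s2 = (a1 - sqrt (a1\<^sup>2 + 4 * a2)) / 2"
  define Z where "Z = (\<lambda>n \<omega>. X n \<omega> - s2 * (if n = 0 then 0 else X (n - 1) \<omega>))"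
  have vieta: "s1 + s2 = a1" "s1 * s2 = - a2"
    using ar2_roots_vieta[of a1 a2] assms(6) unfolding s1_def s2_def by auto
  have s2_neg: "s2 < 0"
    using ar2_small_root_neg[OF assms(6,7)] by (simp add: s2_def)
  have coeff: "- a2 / s2 = s1"
    using vieta(2) s2_neg by (simp add: field_simps)
  have recursion: "\<forall>n\<ge>1. \<forall>\<omega>. Z n \<omega> = s1 * Z (n - 1) \<omega> + Y n \<omega>"
    unfolding Z_def X_def by (intro allI impI ar2_factorised_recursion[OF vieta])
  have X_measurable: "X n \<in> borel_measurable M" for n
    unfolding X_def using assms(2) by (rule ar2_measurable)
  have bound: "\<forall>x\<ge>0. \<forall>N\<ge>1. measure M {\<omega> \<in> space M. (MAX n\<in>{1..N}. X n \<omega>) \<le> x}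
      \<le> measure M {\<omega> \<in> space M. (MAX n\<in>{1..N}. Z n \<omega>) \<le> (1 - s2) * x}"
  proof (intro allI impI measure_Max_le_mono)
    fix x :: real and N :: nat and \<omega> assume "x \<ge> 0" "N \<ge> 1" "\<forall>k\<in>{1..N}. X k \<omega> \<le> x"
    then show "\<forall>n\<in>{1..N}. Z n \<omega> \<le> (1 - s2) * x"
      using bounded_path_shift_bound[of "\<lambda>n. X n \<omega>" x N s2] s2_neg by (simp add: Z_def X_def)
  qed (use X_measurable in \<open>auto simp: Z_def\<close>)
  have s1_lt_1: "s1 < 1"
    using ar2_large_root_lt_1[OF assms(7)] by (simp add: s1_def)
  show ?thesis
    unfolding Let_def X_def[symmetric] s2_def[symmetric] coeff
    using s2_neg s1_lt_1 recursion bound unfolding Z_def by (intro conjI)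
qed

end
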